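(* Let $1\leq p<\infty$ and let $N\geq 2$ be an integer. Let $p_1,\dots,p_N$ be positive integers such that $2p_s<p_t$ for all $1\leq s<t\leq N$, let $l_1,\dots,l_N$ be arbitrary integers, and let $\lambda_1,\dots,\lambda_N$ be real numbers such that $1<|\lambda_s|<|\lambda_t|$ for all $1\leq s<t\leq N$. For $1\leq i\leq N$ define $f_i:\mathbb{Z}\to\mathbb{Z}$ by $f_i(n)=n+p_i$, and define the weight sequence $w^{(i)}=(w^{(i)}_n)_{n\in\mathbb{Z}}$ by $w^{(i)}_n=\lambda_i$ if $n>l_i$ and $w^{(i)}_n=1/\lambda_i$ if $n\leq l_i$. Let $T_i=T_{f_i,w^{(i)}}$ be the corresponding bilateral weighted pseudo-shift on $\ell^p(\mathbb{Z})$. Then each $T_i$ is invertible, $T_1,\dots,T_N$ are disjoint hypercyclic, and $T_1^{-1},\dots,T_N^{-1}$ are also disjoint hypercyclic.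
   Context: $(e_j)_{j\in\mathbb{Z}}$ is the canonical basis of $\ell^p(\mathbb{Z})$. Bilateral weighted pseudo-shift: given an invertible map $f:\mathbb{Z}\to\mathbb{Z}$ and a bounded nonzero weight sequence $w=(w_j)_{j\in\mathbb{Z}}$, $T_{f,w}\big(\sum_{j\in\mathbb{Z}}x_je_j\big)=\sum_{j\in\mathbb{Z}}w_{f(j)}x_{f(j)}e_j$. Operators $T_1,\dots,T_N$ ($N\geq 2$) on a separable Banach space $X$ are disjoint hypercyclic if there is $x\in X$ such that $\{(T_1^nx,\dots,T_N^nx):n\in\mathbb{N}\}$ is dense in $X^N$. *)

theory Defs
  imports "HOL-Analysis.Analysis"
begin

definition lp :: "real \<Rightarrow> (int \<Rightarrow> real) set" where
  "lp p = {x. (\<lambda>j. \<bar>x j\<bar> powr p) summable_on UNIV}"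

definition lp_norm :: "real \<Rightarrow> (int \<Rightarrow> real) \<Rightarrow> real" where
  "lp_norm p x = (\<Sum>\<^sub>\<infinity>j. \<bar>x j\<bar> powr p) powr (1 / p)"

definition pseudo_shift :: "(int \<Rightarrow> int) \<Rightarrow> (int \<Rightarrow> real) \<Rightarrow> (int \<Rightarrow> real) \<Rightarrow> (int \<Rightarrow> real)" where
  "pseudo_shift f w x = (\<lambda>j. w (f j) * x (f j))"

definition bounded_linear_lp :: "real \<Rightarrow> ((int \<Rightarrow> real) \<Rightarrow> (int \<Rightarrow> real)) \<Rightarrow> bool" where
  "bounded_linear_lp p T \<longleftrightarrow>
     T ` lp p \<subseteq> lp p \<and>
     (\<forall>x\<in>lp p. \<forall>y\<in>lp p. \<forall>a b. T (\<lambda>j. a * x j + b * y j) = (\<lambda>j. a * T x j + b * T y j)) \<and>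
     (\<exists>C. \<forall>x\<in>lp p. lp_norm p (T x) \<le> C * lp_norm p x)"

definition invertible_lp :: "real \<Rightarrow> ((int \<Rightarrow> real) \<Rightarrow> (int \<Rightarrow> real)) \<Rightarrow> bool" where
  "invertible_lp p T \<longleftrightarrow> bounded_linear_lp p T \<and>
     (\<exists>S. bounded_linear_lp p S \<and> (\<forall>x\<in>lp p. S (T x) = x \<and> T (S x) = x))"

definition disjoint_hypercyclic_lp ::
  "real \<Rightarrow> nat \<Rightarrow> (nat \<Rightarrow> (int \<Rightarrow> real) \<Rightarrow> (int \<Rightarrow> real)) \<Rightarrow> bool" where
  "disjoint_hypercyclic_lp p N T \<longleftrightarrow>
     (\<exists>x\<in>lp p. \<forall>y. (\<forall>i\<in>{1..N}. y i \<in> lp p) \<longrightarrow>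
        (\<forall>\<epsilon>>0. \<exists>n::nat. \<forall>i\<in>{1..N}. lp_norm p ((T i ^^ n) x - y i) < \<epsilon>))"

end

theory Submission
  imports Defs "HOL-Library.Countable"
begin

text \<open>Along an orbit the weights telescope,
  T_i^n x (j) = lam_i^(E(j + n d_i) - E(j)) x (j + n d_i), for a potential E with
  d_i E(j) = |j| + O(|l_i| + d_i).

  A d-hypercyclic vector x is built explicitly. Enumerate the finitely supported rational target
  tuples z_K and choose times n_0 < n_1 < ... inductively; block K of x consists of the preimages
  of z_K,i under T_i^(n_K), which sit near n_K d_i and have size about |lam_i|^(-n_K). The gaps
  2 d_s < d_t keep all pieces disjoint. For s < t, T_s^(n_K) enlarges the piece of z_K,t at most
  by |lam_s|^(n_K), which is negligible because |lam_s| < |lam_t|; for s > t it carries that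
  piece even farther from the origin, which does not enlarge it; earlier and later blocks are
  made negligible by taking n_K large. Hence ||T_i^(n_K) x - z_K,i||^p <= 3 * 2^(-K).

  Conjugation by the reflection j -> -j turns the inverse of T_i into a shift of the same kind,
  with threshold d_i - l_i - 1, which settles the inverses.\<close>

section \<open>Sums of \<open>p\<close>-th powers on \<open>\<int>\<close>\<close>

definition lp_sum :: "real \<Rightarrow> (int \<Rightarrow> real) \<Rightarrow> real" where
  "lp_sum p x = (\<Sum>\<^sub>\<infinity>j. \<bar>x j\<bar> powr p)"

lemma lp_norm_eq_lp_sum: "lp_norm p x = lp_sum p x powr (1 / p)"
  by (simp add: lp_norm_def lp_sum_def)

lemma lp_sum_nonneg: "0 \<le> lp_sum p x"
  unfolding lp_sum_def by (rule infsum_nonneg) simp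

lemma lp_sum_le_majorant:
  assumes "g summable_on UNIV" "\<And>j. \<bar>x j\<bar> powr p \<le> g j"
  shows "x \<in> lp p" "lp_sum p x \<le> infsum g UNIV"
proof -
  have "(\<lambda>j. \<bar>x j\<bar> powr p) summable_on UNIV"
    by (rule summable_on_comparison_test[OF assms(1)]) (use assms(2) in auto)
  then show "x \<in> lp p" "lp_sum p x \<le> infsum g UNIV"
    unfolding lp_def lp_sum_def using assms by (auto intro: infsum_mono)
qed

lemma lp_reindex:
  assumes "bij h"
  shows "(\<lambda>j. x (h j)) \<in> lp p \<longleftrightarrow> x \<in> lp p" "lp_sum p (\<lambda>j. x (h j)) = lp_sum p x"
  using summable_on_reindex_bij_betw[OF assms, of "\<lambda>j. \<bar>x j\<bar> powr p"]
    infsum_reindex_bij_betw[OF assms, of "\<lambda>j. \<bar>x j\<bar> powr p"]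
  by (simp_all add: lp_def lp_sum_def)

lemma lp_sum_le_scaled:
  assumes "z \<in> lp p" "0 \<le> p" "0 \<le> F" "bij h" "\<And>j. \<bar>u j\<bar> \<le> F * \<bar>z (h j)\<bar>"
  shows "u \<in> lp p" "lp_sum p u \<le> F powr p * lp_sum p z"
proof -
  have zh: "(\<lambda>j. \<bar>z (h j)\<bar> powr p) summable_on UNIV"
    using lp_reindex(1)[OF assms(4)] assms(1) by (simp add: lp_def)
  have "\<bar>u j\<bar> powr p \<le> F powr p * \<bar>z (h j)\<bar> powr p" for j
    using powr_mono2[OF assms(2) _ assms(5)] assms(3) by (simp add: powr_mult)
  note majorant = lp_sum_le_majorant[OF summable_on_cmult_right[OF zh] this]
  have "infsum (\<lambda>j. F powr p * \<bar>z (h j)\<bar> powr p) UNIV = F powr p * lp_sum p z"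
    using lp_reindex(2)[OF assms(4)] by (simp add: infsum_cmult_right' lp_sum_def)
  with majorant show "u \<in> lp p" "lp_sum p u \<le> F powr p * lp_sum p z" by simp_all
qed

lemma lp_if_bounded_support:
  assumes "\<And>j. z j \<noteq> 0 \<Longrightarrow> \<bar>j\<bar> \<le> m"
  shows "z \<in> lp p"
proof -
  have "(\<lambda>j. \<bar>z j\<bar> powr p) summable_on UNIV \<longleftrightarrow> (\<lambda>j. \<bar>z j\<bar> powr p) summable_on {-m..m}"
    by (rule summable_on_cong_neutral) (use assms in force)+
  then show ?thesis by (simp add: lp_def)
qed

lemma lp_sum_add_le:
  assumes "u \<in> lp p" "v \<in> lp p" "0 \<le> p"
  shows "(\<lambda>j. u j + v j) \<in> lp p" "lp_sum p (\<lambda>j. u j + v j) \<le> 2 powr p * (lp_sum p u + lp_sum p v)"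
proof -
  have us: "(\<lambda>j. \<bar>u j\<bar> powr p) summable_on UNIV" and vs: "(\<lambda>j. \<bar>v j\<bar> powr p) summable_on UNIV"
    using assms by (auto simp: lp_def)
  have "\<bar>u j + v j\<bar> powr p \<le> 2 powr p * (\<bar>u j\<bar> powr p + \<bar>v j\<bar> powr p)" for j
  proof -
    have "\<bar>u j + v j\<bar> powr p \<le> (2 * max \<bar>u j\<bar> \<bar>v j\<bar>) powr p"
      by (rule powr_mono2) (use assms in auto)
    also have "\<dots> = 2 powr p * max \<bar>u j\<bar> \<bar>v j\<bar> powr p" by (simp add: powr_mult)
    also have "max \<bar>u j\<bar> \<bar>v j\<bar> powr p \<le> \<bar>u j\<bar> powr p + \<bar>v j\<bar> powr p"
      by (simp add: max_def)
    finally show ?thesis by simp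
  qed
  note majorant = lp_sum_le_majorant[OF summable_on_cmult_right[OF summable_on_add[OF us vs]] this]
  have "infsum (\<lambda>j. 2 powr p * (\<bar>u j\<bar> powr p + \<bar>v j\<bar> powr p)) UNIV = 2 powr p * (lp_sum p u + lp_sum p v)"
    using us vs by (simp add: infsum_cmult_right' infsum_add lp_sum_def)
  with majorant show "(\<lambda>j. u j + v j) \<in> lp p"
    "lp_sum p (\<lambda>j. u j + v j) \<le> 2 powr p * (lp_sum p u + lp_sum p v)" by simp_all
qed

lemma lp_sum_le_of_pieces:
  assumes pieces: "\<And>a. a \<in> B \<Longrightarrow> v a \<in> lp p"
    and bound: "\<And>A. finite A \<Longrightarrow> A \<subseteq> B \<Longrightarrow> (\<Sum>a\<in>A. lp_sum p (v a)) \<le> S"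
    and cover: "\<And>j. u j \<noteq> 0 \<Longrightarrow> \<exists>a\<in>B. u j = v a j"
  shows "u \<in> lp p" "lp_sum p u \<le> S"
proof -
  obtain c where c: "\<And>j. u j \<noteq> 0 \<Longrightarrow> c j \<in> B \<and> u j = v (c j) j" using cover by metis
  have finite_sums: "(\<Sum>j\<in>J. \<bar>u j\<bar> powr p) \<le> S" if J: "finite J" for J
  proof -
    define J' where "J' = {j\<in>J. u j \<noteq> 0}"
    have fin: "finite J'" "finite (c ` J')" and sub: "c ` J' \<subseteq> B"
      using J c by (auto simp: J'_def)
    have "(\<Sum>j\<in>J. \<bar>u j\<bar> powr p) = (\<Sum>j\<in>J'. \<bar>u j\<bar> powr p)"
      by (rule sum.mono_neutral_right) (auto simp: J'_def J)
    also have "\<dots> \<le> (\<Sum>j\<in>J'. \<Sum>a\<in>c ` J'. \<bar>v a j\<bar> powr p)"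
    proof (rule sum_mono)
      fix j assume "j \<in> J'"
      then show "\<bar>u j\<bar> powr p \<le> (\<Sum>a\<in>c ` J'. \<bar>v a j\<bar> powr p)"
        using c[of j] member_le_sum[of "c j" "c ` J'" "\<lambda>a. \<bar>v a j\<bar> powr p"] fin
        by (auto simp: J'_def)
    qed
    also have "\<dots> = (\<Sum>a\<in>c ` J'. \<Sum>j\<in>J'. \<bar>v a j\<bar> powr p)" by (rule sum.swap)
    also have "\<dots> \<le> (\<Sum>a\<in>c ` J'. lp_sum p (v a))"
      using pieces sub fin unfolding lp_sum_def lp_def
      by (intro sum_mono finite_sum_le_infsum) auto
    also have "\<dots> \<le> S" by (rule bound[OF fin(2) sub])
    finally show ?thesis .
  qed
  have "(\<lambda>j. \<bar>u j\<bar> powr p) summable_on UNIV"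
    by (rule nonneg_bdd_above_summable_on) (use finite_sums in \<open>auto intro!: bdd_aboveI[where M=S]\<close>)
  then show "u \<in> lp p" "lp_sum p u \<le> S"
    unfolding lp_def lp_sum_def using finite_sums by (auto intro: infsum_le_finite_sums)
qed

definition reflect :: "(int \<Rightarrow> real) \<Rightarrow> int \<Rightarrow> real" where
  "reflect x = (\<lambda>j. x (- j))"

lemma reflect_reflect [simp]: "reflect (reflect x) = x"
  by (simp add: reflect_def)

lemma bij_uminus_int: "bij (uminus :: int \<Rightarrow> int)"
  by (rule bij_betwI[where g=uminus]) auto

lemma lp_reflect_iff [simp]: "reflect x \<in> lp p \<longleftrightarrow> x \<in> lp p"
  using lp_reindex(1)[OF bij_uminus_int] by (simp add: reflect_def)

lemma lp_sum_reflect [simp]: "lp_sum p (reflect x) = lp_sum p x"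
  using lp_reindex(2)[OF bij_uminus_int] by (simp add: reflect_def)

lemma lp_tail_small:
  assumes "y \<in> lp p" "0 < e"
  shows "eventually (\<lambda>M. (\<Sum>\<^sub>\<infinity>j\<in>{j. int M < \<bar>j\<bar>}. \<bar>y j\<bar> powr p) \<le> e) sequentially"
proof -
  define h where "h j = \<bar>y j\<bar> powr p" for j
  have h: "h summable_on UNIV" using assms(1) by (simp add: lp_def h_def[abs_def])
  obtain F where F: "finite F" "dist (sum h F) (infsum h UNIV) \<le> e"
    using infsum_finite_approximation[OF h assms(2)] by auto
  define M0 where "M0 = nat (\<Sum>j\<in>F. \<bar>j\<bar>)"
  have M0: "\<bar>j\<bar> \<le> int M0" if "j \<in> F" for j
    using member_le_sum[of j F abs] that F(1) by (simp add: M0_def)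
  show ?thesis
  proof (rule eventually_sequentiallyI[of M0])
    fix M assume "M0 \<le> M"
    define W where "W = {j. \<bar>j\<bar> \<le> int M}"
    have FW: "F \<subseteq> W" using M0 \<open>M0 \<le> M\<close> by (force simp: W_def)
    have compl: "{j. int M < \<bar>j\<bar>} = - W" by (auto simp: W_def)
    have hW: "h summable_on W" and hW': "h summable_on - W" by (rule summable_on_subset[OF h]; simp)+
    have "infsum h UNIV = infsum h W + infsum h (- W)"
      using infsum_Un_disjoint[OF hW hW'] by (simp add: Un_ac)
    moreover have "sum h F \<le> infsum h W"
      by (rule finite_sum_le_infsum[OF hW F(1) FW]) (simp add: h_def)
    ultimately show "(\<Sum>\<^sub>\<infinity>j\<in>{j. int M < \<bar>j\<bar>}. \<bar>y j\<bar> powr p) \<le> e"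
      using F(2) by (simp add: compl h_def[symmetric] dist_real_def)
  qed
qed

lemma lp_sum_le_window:
  assumes "y \<in> lp p" "\<And>j. \<bar>j\<bar> \<le> int M \<Longrightarrow> \<bar>u j\<bar> powr p \<le> \<delta>"
    "\<And>j. int M < \<bar>j\<bar> \<Longrightarrow> \<bar>u j\<bar> = \<bar>y j\<bar>"
  shows "lp_sum p u \<le> (2 * real M + 1) * \<delta> + (\<Sum>\<^sub>\<infinity>j\<in>{j. int M < \<bar>j\<bar>}. \<bar>y j\<bar> powr p)"
proof -
  define W where "W = {- int M..int M}"
  define g where "g j = (if j \<in> W then \<delta> else \<bar>y j\<bar> powr p)" for j
  have compl: "{j. int M < \<bar>j\<bar>} = - W" by (auto simp: W_def)
  have finW: "finite W" by (simp add: W_def)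
  then have gW: "g summable_on W" by (rule summable_on_finite)
  have "(\<lambda>j. \<bar>y j\<bar> powr p) summable_on UNIV" using assms(1) by (simp add: lp_def)
  then have "(\<lambda>j. \<bar>y j\<bar> powr p) summable_on - W" by (rule summable_on_subset_banach) simp
  then have gW': "g summable_on - W"
    by (rule summable_on_cong[THEN iffD1, rotated]) (simp add: g_def)
  have disj: "W \<inter> - W = {}" by simp
  have gU: "g summable_on UNIV"
    using summable_on_Un_disjoint[OF gW gW' disj] by simp
  have "\<bar>u j\<bar> powr p \<le> g j" for j
    using assms(2)[of j] assms(3)[of j] by (cases "j \<in> W") (auto simp: g_def W_def)
  then have "lp_sum p u \<le> infsum g UNIV" by (rule lp_sum_le_majorant(2)[OF gU])
  also have "\<dots> = infsum g W + infsum g (- W)"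
    using infsum_Un_disjoint[OF gW gW' disj] by simp
  also have "infsum g W = infsum (\<lambda>_. \<delta>) W"
    by (rule infsum_cong) (simp add: g_def)
  also have "\<dots> = real (card W) * \<delta>"
    using finW by (simp add: infsum_finite)
  also have "real (card W) = 2 * real M + 1"
    by (simp add: W_def)
  also have "infsum g (- W) = (\<Sum>\<^sub>\<infinity>j\<in>{j. int M < \<bar>j\<bar>}. \<bar>y j\<bar> powr p)"
    unfolding compl by (rule infsum_cong) (simp add: g_def)
  finally show ?thesis .
qed

lemma rat_approx_powr:
  fixes p \<delta> r :: real
  assumes "0 < p" "0 < \<delta>"
  shows "\<exists>q. \<bar>of_rat q - r\<bar> powr p < \<delta>"
proof -
  define e where "e = \<delta> powr (1 / p)"
  have e: "0 < e" using assms(2) by (auto simp: e_def)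
  obtain s where "s \<in> \<rat>" "r - e < s" "s < r + e"
    using Rats_dense_in_real[of "r - e" "r + e"] e by auto
  then obtain q where "\<bar>of_rat q - r\<bar> < e" by (metis Rats_cases abs_diff_less_iff)
  then have "\<bar>of_rat q - r\<bar> powr p < e powr p" using assms by (intro powr_less_mono2) auto
  also have "e powr p = \<delta>" using assms by (simp add: e_def powr_powr)
  finally show ?thesis by blast
qed

text \<open>A code \<open>(M, qs)\<close> lists the rational values on \<open>[-M, M]\<close> of each component
  \<open>qs ! i\<close>; the codes form a countable type, so they can be enumerated.\<close>

definition finite_target :: "nat \<times> rat list list \<Rightarrow> nat \<Rightarrow> int \<Rightarrow> real" where
  "finite_target c i j =
     (if \<bar>j\<bar> \<le> int (fst c) then of_rat (snd c ! i ! nat (j + int (fst c))) else 0)"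

lemma finite_target_support: "finite_target c i j \<noteq> 0 \<Longrightarrow> \<bar>j\<bar> \<le> int (fst c)"
  by (auto simp: finite_target_def split: if_splits)

lemma finite_target_code:
  "\<exists>c. \<forall>i\<le>N. \<forall>j. finite_target c i j = (if \<bar>j\<bar> \<le> int M then of_rat (q i j) else 0)"
proof -
  define c where "c = (M, map (\<lambda>i. map (\<lambda>t. q i (int t - int M)) [0..<2*M+1]) [0..<N+1])"
  have "finite_target c i j = (if \<bar>j\<bar> \<le> int M then of_rat (q i j) else 0)" if "i \<le> N" for i j
  proof (cases "\<bar>j\<bar> \<le> int M")
    case True
    then have "0 \<le> j + int M" "nat (j + int M) < 2 * M + 1" by linarith+
    then show ?thesis using True that by (simp add: finite_target_def c_def del: upt_Suc)
  qed (simp add: finite_target_def c_def)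
  then show ?thesis by blast
qed

lemma finite_targets_dense:
  assumes y: "\<forall>i\<in>{1..N}. y i \<in> lp p" and p: "0 < p" and \<eta>: "0 < \<eta>"
  shows "\<exists>c. \<forall>i\<in>{1..N}. lp_sum p (\<lambda>j. finite_target c i j - y i j) < \<eta>"
proof -
  have "eventually (\<lambda>M. \<forall>i\<in>{1..N}. (\<Sum>\<^sub>\<infinity>j\<in>{j. int M < \<bar>j\<bar>}. \<bar>y i j\<bar> powr p) \<le> \<eta> / 4) sequentially"
    using y \<eta> by (intro eventually_ball_finite ballI lp_tail_small) auto
  then obtain M where M: "\<And>i. i \<in> {1..N} \<Longrightarrow> (\<Sum>\<^sub>\<infinity>j\<in>{j. int M < \<bar>j\<bar>}. \<bar>y i j\<bar> powr p) \<le> \<eta> / 4"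
    using eventually_happens'[OF sequentially_bot] by blast
  define \<delta> where "\<delta> = \<eta> / (4 * M + 2)"
  have "\<forall>i j. \<exists>q. \<bar>of_rat q - y i j\<bar> powr p < \<delta>"
    using rat_approx_powr[OF p] \<eta> by (simp add: \<delta>_def)
  then obtain q where q: "\<And>i j. \<bar>of_rat (q i j) - y i j\<bar> powr p < \<delta>" by metis
  obtain c where c: "\<forall>i\<le>N. \<forall>j. finite_target c i j = (if \<bar>j\<bar> \<le> int M then of_rat (q i j) else 0)"
    using finite_target_code by blast
  have "lp_sum p (\<lambda>j. finite_target c i j - y i j) < \<eta>" if i: "i \<in> {1..N}" for i
  proof -
    have "\<bar>finite_target c i j - y i j\<bar> powr p \<le> \<delta>" if "\<bar>j\<bar> \<le> int M" for j
      using c q[of i j] i that by (simp add: less_imp_le)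
    moreover have "\<bar>finite_target c i j - y i j\<bar> = \<bar>y i j\<bar>" if "int M < \<bar>j\<bar>" for j
      using c i that by simp
    ultimately have "lp_sum p (\<lambda>j. finite_target c i j - y i j)
        \<le> (2 * real M + 1) * \<delta> + (\<Sum>\<^sub>\<infinity>j\<in>{j. int M < \<bar>j\<bar>}. \<bar>y i j\<bar> powr p)"
      by (rule lp_sum_le_window[where u="\<lambda>j. finite_target c i j - y i j", OF y[rule_format, OF i]])
    also have "\<dots> \<le> (2 * real M + 1) * \<delta> + \<eta> / 4" using M[OF i] by simp
    also have "(2 * real M + 1) * \<delta> = \<eta> / 2" by (simp add: \<delta>_def field_simps)
    finally show ?thesis using \<eta> by simp
  qed
  then show ?thesis by blast
qed

section \<open>Weighted shifts with a threshold\<close>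

definition step_weight :: "int \<Rightarrow> real \<Rightarrow> int \<Rightarrow> real" where
  "step_weight l lam j = (if l < j then lam else 1 / lam)"

definition wshift :: "nat \<Rightarrow> int \<Rightarrow> real \<Rightarrow> (int \<Rightarrow> real) \<Rightarrow> int \<Rightarrow> real" where
  "wshift d l lam = pseudo_shift (\<lambda>j. j + int d) (step_weight l lam)"

lemma wshift_apply: "wshift d l lam x j = step_weight l lam (j + int d) * x (j + int d)"
  by (simp add: wshift_def pseudo_shift_def)

text \<open>A potential for the weights: along \<open>j \<mapsto> j + d\<close> it rises by one to the right of
  \<open>l\<close> and falls by one to its left, so products of weights telescope into a single power
  of \<open>lam\<close>; moreover \<open>d * weight_exponent d l j\<close> is \<open>\<bar>j\<bar>\<close> up to \<open>\<bar>l\<bar> + d\<close>.\<close>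

definition weight_exponent :: "nat \<Rightarrow> int \<Rightarrow> int \<Rightarrow> int" where
  "weight_exponent d l j = \<bar>(j - l - 1 + int d) div int d\<bar>"

lemma weight_exponent_step:
  assumes "0 < d"
  obtains "l < j + int d" "weight_exponent d l (j + int d) = weight_exponent d l j + 1"
    | "j + int d \<le> l" "weight_exponent d l (j + int d) = weight_exponent d l j - 1"
proof -
  define a where "a = (j - l - 1 + int d) div int d"
  have "j + int d - l - 1 + int d = (j - l - 1 + int d) + int d" by simp
  then have "(j + int d - l - 1 + int d) div int d = a + 1"
    using assms unfolding a_def by (simp only: div_add_self2)
  moreover have "0 \<le> a \<longleftrightarrow> 0 \<le> j - l - 1 + int d"
    unfolding a_def using assms by (intro pos_imp_zdiv_nonneg_iff) simp
  moreover have "0 \<le> j - l - 1 + int d \<longleftrightarrow> l < j + int d" by linarith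
  ultimately show ?thesis
    using that by (auto simp: weight_exponent_def a_def[symmetric])
qed

lemma step_weight_eq_power_int:
  assumes "0 < d" "lam \<noteq> 0"
  shows "step_weight l lam (j + int d) = lam powi (weight_exponent d l (j + int d) - weight_exponent d l j)"
  by (cases rule: weight_exponent_step[OF assms(1), of l j])
    (use assms(2) in \<open>auto simp: step_weight_def power_int_minus divide_inverse\<close>)

lemma weight_exponent_shift_le:
  assumes "0 < d"
  shows "weight_exponent d l (j + int n * int d) - weight_exponent d l j \<le> int n"
proof (induction n)
  case (Suc n)
  have "weight_exponent d l (j + int n * int d + int d) \<le> weight_exponent d l (j + int n * int d) + 1"
    by (cases rule: weight_exponent_step[OF assms, of l "j + int n * int d"]) auto
  then show ?case using Suc by (simp add: algebra_simps)
qed simp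

lemma weight_exponent_approx:
  assumes "0 < d"
  shows "\<bar>int d * weight_exponent d l j - \<bar>j\<bar>\<bar> \<le> \<bar>l\<bar> + int d"
proof -
  define a where "a = (j - l - 1 + int d) div int d"
  define r where "r = (j - l - 1 + int d) mod int d"
  have "int d * a + r = j - l - 1 + int d" unfolding a_def r_def by (rule mult_div_mod_eq)
  moreover have "0 \<le> r" "r < int d" unfolding r_def using assms by auto
  moreover have "int d * weight_exponent d l j = \<bar>int d * a\<bar>"
    by (simp add: weight_exponent_def a_def abs_mult)
  ultimately show ?thesis by linarith
qed

lemma weight_exponent_diff_le:
  assumes "0 < d" "0 \<le> X" "\<bar>a\<bar> - \<bar>b\<bar> + 2 * (\<bar>l\<bar> + int d) \<le> X - int n * int d"
  shows "weight_exponent d l a - weight_exponent d l b \<le> X - int n"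
proof -
  define e where "e = weight_exponent d l a - weight_exponent d l b + int n"
  have de: "int d * e \<le> X"
    using weight_exponent_approx[OF assms(1), of l a] weight_exponent_approx[OF assms(1), of l b] assms(3)
    by (simp add: e_def algebra_simps)
  have "e \<le> X"
  proof (cases "0 < e")
    case True
    then have "e \<le> int d * e" using mult_right_mono[of 1 "int d" e] assms(1) by simp
    with de show ?thesis by linarith
  qed (use assms(2) in linarith)
  then show ?thesis by (simp add: e_def)
qed

lemma wshift_power:
  assumes "0 < d" "lam \<noteq> 0"
  shows "(wshift d l lam ^^ n) x j =
    lam powi (weight_exponent d l (j + int n * int d) - weight_exponent d l j) * x (j + int n * int d)"
proof (induction n arbitrary: j)
  case (Suc n)
  have "(wshift d l lam ^^ Suc n) x j = step_weight l lam (j + int d) * (wshift d l lam ^^ n) x (j + int d)"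
    by (simp add: wshift_apply)
  also have "\<dots> = lam powi (weight_exponent d l (j + int (Suc n) * int d) - weight_exponent d l j)
      * x (j + int (Suc n) * int d)"
    using assms by (simp add: Suc step_weight_eq_power_int algebra_simps flip: power_int_add)
  finally show ?case .
qed simp

lemma abs_power_int_eq_powr: "x \<noteq> 0 \<Longrightarrow> \<bar>x powi k\<bar> = \<bar>x\<bar> powr real_of_int k" for x :: real
  by (simp add: power_int_abs powr_real_of_int')

lemma wshift_power_abs_le:
  assumes "0 < d" "1 \<le> \<bar>lam\<bar>"
  shows "\<bar>(wshift d l lam ^^ n) x j\<bar> \<le> \<bar>lam\<bar> powr real n * \<bar>x (j + int n * int d)\<bar>"
proof -
  have "\<bar>lam\<bar> powr real_of_int (weight_exponent d l (j + int n * int d) - weight_exponent d l j)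
      \<le> \<bar>lam\<bar> powr real n"
    using weight_exponent_shift_le[OF assms(1), of l j n] assms(2) by (intro powr_mono) auto
  moreover have "lam \<noteq> 0" using assms(2) by auto
  ultimately show ?thesis
    using assms(1) by (simp add: wshift_power abs_mult abs_power_int_eq_powr mult_right_mono)
qed

lemma abs_step_weight_le:
  assumes "1 \<le> \<bar>lam\<bar>"
  shows "\<bar>step_weight l lam j\<bar> \<le> \<bar>lam\<bar>"
proof -
  have "\<bar>1 / lam\<bar> \<le> 1" using assms by (simp add: abs_divide divide_le_eq_1)
  then show ?thesis using assms by (auto simp: step_weight_def simp del: abs_divide)
qed

lemma wshift_lp:
  assumes "x \<in> lp p" "1 \<le> \<bar>lam\<bar>" "0 \<le> p"
  shows "wshift d l lam x \<in> lp p" "lp_sum p (wshift d l lam x) \<le> \<bar>lam\<bar> powr p * lp_sum p x"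
proof -
  have bij: "bij (\<lambda>j::int. j + int d)" by (rule bij_betwI[where g="\<lambda>j. j - int d"]) auto
  have "\<bar>wshift d l lam x j\<bar> \<le> \<bar>lam\<bar> * \<bar>x (j + int d)\<bar>" for j
    unfolding wshift_apply abs_mult by (rule mult_right_mono[OF abs_step_weight_le[OF assms(2)]]) simp
  from lp_sum_le_scaled[OF assms(1,3) _ bij this]
  show "wshift d l lam x \<in> lp p" "lp_sum p (wshift d l lam x) \<le> \<bar>lam\<bar> powr p * lp_sum p x"
    by simp_all
qed

lemma wshift_power_lp:
  assumes "x \<in> lp p" "1 \<le> \<bar>lam\<bar>" "0 \<le> p"
  shows "(wshift d l lam ^^ n) x \<in> lp p"
    "lp_sum p ((wshift d l lam ^^ n) x) \<le> (\<bar>lam\<bar> powr real n) powr p * lp_sum p x"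
proof (induction n)
  case (Suc n)
  note step = wshift_lp[OF Suc.IH(1) assms(2,3), where d=d and l=l]
  show "(wshift d l lam ^^ Suc n) x \<in> lp p" using step(1) by simp
  have "lp_sum p ((wshift d l lam ^^ Suc n) x) \<le> \<bar>lam\<bar> powr p * ((\<bar>lam\<bar> powr real n) powr p * lp_sum p x)"
    using step(2) Suc.IH(2) assms(2) by (simp add: order_trans mult_left_mono)
  also have "\<dots> = (\<bar>lam\<bar> powr real (Suc n)) powr p * lp_sum p x"
    using assms(2) by (simp add: powr_powr powr_add[symmetric] algebra_simps)
  finally show "lp_sum p ((wshift d l lam ^^ Suc n) x) \<le> (\<bar>lam\<bar> powr real (Suc n)) powr p * lp_sum p x" .
qed (use assms(1,2) in auto)

definition wshift_inv :: "nat \<Rightarrow> int \<Rightarrow> real \<Rightarrow> (int \<Rightarrow> real) \<Rightarrow> int \<Rightarrow> real" where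
  "wshift_inv d l lam x = (\<lambda>j. x (j - int d) / step_weight l lam j)"

lemma wshift_inv_wshift: "lam \<noteq> 0 \<Longrightarrow> wshift_inv d l lam (wshift d l lam x) = x"
  by (rule ext) (simp add: wshift_inv_def wshift_apply step_weight_def)

lemma wshift_wshift_inv: "lam \<noteq> 0 \<Longrightarrow> wshift d l lam (wshift_inv d l lam x) = x"
  by (rule ext) (simp add: wshift_inv_def wshift_apply step_weight_def)

lemma wshift_inv_eq_reflect:
  "lam \<noteq> 0 \<Longrightarrow> wshift_inv d l lam x = reflect (wshift d (int d - l - 1) lam (reflect x))"
  by (rule ext) (auto simp: wshift_inv_def wshift_apply reflect_def step_weight_def)

lemma wshift_inv_lp:
  assumes "x \<in> lp p" "1 \<le> \<bar>lam\<bar>" "0 \<le> p"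
  shows "wshift_inv d l lam x \<in> lp p" "lp_sum p (wshift_inv d l lam x) \<le> \<bar>lam\<bar> powr p * lp_sum p x"
  using wshift_lp[of "reflect x" p lam d "int d - l - 1"] assms
  by (auto simp: wshift_inv_eq_reflect)

lemma bounded_linear_lpI:
  assumes "\<And>x. x \<in> lp p \<Longrightarrow> T x \<in> lp p"
    and "\<And>x y a b. T (\<lambda>j. a * x j + b * y j) = (\<lambda>j. a * T x j + b * T y j)"
    and "\<And>x. x \<in> lp p \<Longrightarrow> lp_sum p (T x) \<le> c powr p * lp_sum p x"
    and "0 \<le> c" "0 < p"
  shows "bounded_linear_lp p T"
proof -
  have "lp_norm p (T x) \<le> c * lp_norm p x" if "x \<in> lp p" for x
  proof -
    have "lp_norm p (T x) \<le> (c powr p * lp_sum p x) powr (1 / p)"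
      unfolding lp_norm_eq_lp_sum using assms(3)[OF that] assms(5) lp_sum_nonneg
      by (intro powr_mono2) auto
    also have "\<dots> = c * lp_norm p x"
      using assms(4,5) by (simp add: powr_mult powr_powr lp_norm_eq_lp_sum lp_sum_nonneg)
    finally show ?thesis .
  qed
  then show ?thesis using assms(1,2) unfolding bounded_linear_lp_def by blast
qed

lemma invertible_wshift:
  assumes "1 \<le> \<bar>lam\<bar>" "1 \<le> p"
  shows "invertible_lp p (wshift d l lam)"
proof -
  have "lam \<noteq> 0" using assms(1) by auto
  moreover have "bounded_linear_lp p (wshift d l lam)"
    using wshift_lp assms by (intro bounded_linear_lpI[where c="\<bar>lam\<bar>"])
      (auto simp: wshift_apply algebra_simps)
  moreover have "bounded_linear_lp p (wshift_inv d l lam)"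
    using wshift_inv_lp assms by (intro bounded_linear_lpI[where c="\<bar>lam\<bar>"])
      (auto simp: wshift_inv_def add_divide_distrib)
  ultimately show ?thesis
    unfolding invertible_lp_def using wshift_inv_wshift wshift_wshift_inv by blast
qed

lemma wshift_inv_power:
  assumes "1 \<le> \<bar>lam\<bar>" "0 \<le> p" "y \<in> lp p"
  shows "(inv_into (lp p) (wshift d l lam) ^^ n) y = reflect ((wshift d (int d - l - 1) lam ^^ n) (reflect y))"
proof (induction n)
  case (Suc n)
  have lam: "lam \<noteq> 0" using assms(1) by auto
  define u where "u = (wshift d (int d - l - 1) lam ^^ n) (reflect y)"
  have u: "u \<in> lp p" unfolding u_def using assms by (intro wshift_power_lp) auto
  have inj: "inj_on (wshift d l lam) (lp p)"
    by (rule inj_on_inverseI[where g="wshift_inv d l lam"]) (simp add: wshift_inv_wshift[OF lam])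
  have "(inv_into (lp p) (wshift d l lam) ^^ Suc n) y = inv_into (lp p) (wshift d l lam) (reflect u)"
    using Suc by (simp add: u_def)
  also have "\<dots> = wshift_inv d l lam (reflect u)"
    using wshift_inv_lp[of "reflect u" p lam d l] assms u wshift_wshift_inv[OF lam]
    by (intro inv_into_f_eq[OF inj]) auto
  also have "\<dots> = reflect ((wshift d (int d - l - 1) lam ^^ Suc n) (reflect y))"
    by (simp add: wshift_inv_eq_reflect[OF lam] u_def)
  finally show ?case .
qed simp

lemma sum_le_card_mult_sum_fst:
  fixes f :: "'a \<times> 'b \<Rightarrow> real"
  assumes "finite A" "finite I" "A \<subseteq> UNIV \<times> I" "\<And>a. a \<in> A \<Longrightarrow> f a \<le> g (fst a)" "\<And>k. 0 \<le> g k"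
  shows "(\<Sum>a\<in>A. f a) \<le> real (card I) * (\<Sum>k\<in>fst ` A. g k)"
proof -
  have "(\<Sum>a\<in>A. f a) \<le> (\<Sum>(k, i)\<in>A. g k)" by (rule sum_mono) (auto dest: assms(4))
  also have "\<dots> \<le> (\<Sum>(k, i)\<in>fst ` A \<times> I. g k)"
    using assms by (intro sum_mono2) (force simp: mem_Times_iff)+
  also have "\<dots> = (\<Sum>k\<in>fst ` A. real (card I) * g k)"
    by (simp add: sum.cartesian_product[symmetric])
  also have "\<dots> = real (card I) * (\<Sum>k\<in>fst ` A. g k)"
    by (simp add: sum_distrib_left)
  finally show ?thesis .
qed

lemma sum_half_power_le: "finite F \<Longrightarrow> (\<Sum>k\<in>F. (1/2::real) ^ k) \<le> 2"
proof -
  assume "finite F"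
  then have "(\<Sum>k\<in>F. (1/2::real) ^ k) \<le> (\<Sum>k. (1/2::real) ^ k)"
    by (intro sum_le_suminf summable_geometric) auto
  also have "\<dots> = 2" by (simp add: suminf_geometric)
  finally show ?thesis .
qed

lemma sum_half_power_above_le:
  assumes "finite F" "\<And>k. k \<in> F \<Longrightarrow> K < k"
  shows "(\<Sum>k\<in>F. (1/2::real) ^ k) \<le> (1/2) ^ K"
proof -
  have inj: "inj_on (\<lambda>k. k - Suc K) F"
  proof (rule inj_onI)
    fix x y assume "x \<in> F" "y \<in> F" "x - Suc K = y - Suc K"
    then show "x = y" using assms(2)[of x] assms(2)[of y] by arith
  qed
  have "(\<Sum>k\<in>F. (1/2::real) ^ k) = (\<Sum>k\<in>F. (1/2) ^ Suc K * (1/2) ^ (k - Suc K))"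
  proof (rule sum.cong)
    fix k assume "k \<in> F"
    then have "k = Suc K + (k - Suc K)" using assms(2)[of k] by linarith
    then show "(1/2::real) ^ k = (1/2) ^ Suc K * (1/2) ^ (k - Suc K)" by (metis power_add)
  qed simp
  also have "\<dots> = (1/2) ^ Suc K * (\<Sum>k\<in>(\<lambda>k. k - Suc K) ` F. (1/2) ^ k)"
    by (simp add: sum_distrib_left sum.reindex[OF inj])
  also have "\<dots> \<le> (1/2) ^ Suc K * 2"
    by (intro mult_left_mono sum_half_power_le) (use assms(1) in auto)
  finally show ?thesis by simp
qed

lemma eventually_powr_mult_le:
  fixes f :: "nat \<Rightarrow> real"
  assumes "(f \<longlongrightarrow> 0) sequentially" "\<And>n. 0 \<le> f n" "0 < \<epsilon>" "0 < p"
  shows "eventually (\<lambda>n. f n powr p * a \<le> \<epsilon>) sequentially"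
proof -
  have "((\<lambda>n. f n powr p) \<longlongrightarrow> 0) sequentially"
    by (rule tendsto_zero_powrI[OF assms(1) tendsto_const]) (use assms in auto)
  then have "((\<lambda>n. f n powr p * a) \<longlongrightarrow> 0 * a) sequentially"
    by (intro tendsto_mult tendsto_const)
  from order_tendstoD(2)[OF this] assms(3)
  have "eventually (\<lambda>n. f n powr p * a < \<epsilon>) sequentially" by simp
  then show ?thesis by (rule eventually_mono) simp
qed

lemma powr_minus_tendsto_zero:
  fixes a c :: real
  assumes "1 < a"
  shows "((\<lambda>n. a powr (c - real n)) \<longlongrightarrow> 0) sequentially"
proof -
  have "a powr (c - real n) = a powr c * (inverse a) ^ n" for n
    using assms by (simp add: powr_diff powr_realpow divide_inverse power_inverse)
  moreover have "((\<lambda>n. a powr c * (inverse a) ^ n) \<longlongrightarrow> a powr c * 0) sequentially"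
    using assms by (intro tendsto_mult tendsto_const LIMSEQ_realpow_zero) (auto simp: field_simps)
  ultimately show ?thesis by simp
qed

lemma powr_ratio_tendsto_zero:
  fixes a b c :: real
  assumes "0 < b" "b < a"
  shows "((\<lambda>n. b powr real n * a powr (c - real n)) \<longlongrightarrow> 0) sequentially"
proof -
  have "b powr real n * a powr (c - real n) = a powr c * (b / a) ^ n" for n
    using assms by (simp add: powr_diff powr_realpow power_divide)
  moreover have "((\<lambda>n. a powr c * (b / a) ^ n) \<longlongrightarrow> a powr c * 0) sequentially"
    using assms by (intro tendsto_mult tendsto_const LIMSEQ_realpow_zero) auto
  ultimately show ?thesis by simp
qed

section \<open>The block construction\<close>

locale dhc_construction =
  fixes p :: real and N :: nat and d :: "nat \<Rightarrow> nat" and l :: "nat \<Rightarrow> int" and lam :: "nat \<Rightarrow> real"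
    and z :: "nat \<Rightarrow> nat \<Rightarrow> int \<Rightarrow> real" and m :: "nat \<Rightarrow> nat"
  assumes p_ge_1: "1 \<le> p" and N_pos: "1 \<le> N"
    and d_pos: "\<And>i. i \<in> {1..N} \<Longrightarrow> 0 < d i"
    and d_gap: "\<And>s t. s \<in> {1..N} \<Longrightarrow> t \<in> {1..N} \<Longrightarrow> s < t \<Longrightarrow> 2 * d s < d t"
    and lam_less: "\<And>s t. s \<in> {1..N} \<Longrightarrow> t \<in> {1..N} \<Longrightarrow> s < t \<Longrightarrow> \<bar>lam s\<bar> < \<bar>lam t\<bar>"
    and lam_gt_1: "\<And>i. i \<in> {1..N} \<Longrightarrow> 1 < \<bar>lam i\<bar>"
    and z_support: "\<And>K i j. z K i j \<noteq> 0 \<Longrightarrow> \<bar>j\<bar> \<le> int (m K)"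
begin

abbreviation T :: "nat \<Rightarrow> (int \<Rightarrow> real) \<Rightarrow> int \<Rightarrow> real" where
  "T i \<equiv> wshift (d i) (l i) (lam i)"

abbreviation E :: "nat \<Rightarrow> int \<Rightarrow> int" where
  "E i \<equiv> weight_exponent (d i) (l i)"

definition slack :: "nat \<Rightarrow> int" where
  "slack i = \<bar>l i\<bar> + int (d i)"

definition decay :: "nat \<Rightarrow> int \<Rightarrow> nat \<Rightarrow> real" where
  "decay i c n = \<bar>lam i\<bar> powr (real_of_int c - real n)"

definition eps :: "nat \<Rightarrow> real" where
  "eps K = (1/2) ^ K / real N"

definition reach :: "nat \<Rightarrow> nat \<Rightarrow> int" where
  "reach K n' = int n' * int (d N) + int (\<Sum>k<K. m k)"

text \<open>Requirements on the time \<open>n\<close> at which the \<open>K\<close>-th target is hit, given the previous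
  time \<open>n'\<close>: block \<open>K\<close> lies to the right of \<open>reach K n'\<close>, which bounds the earlier blocks,
  and each of the three kinds of interference (block \<open>K\<close> seen at times \<open>\<le> n'\<close>, the other
  components of block \<open>K\<close> at time \<open>n\<close>, and the earlier blocks at time \<open>n\<close>) is at most \<open>eps K\<close>.\<close>

definition admissible :: "nat \<Rightarrow> nat \<Rightarrow> nat \<Rightarrow> bool" where
  "admissible K n' n \<longleftrightarrow> n' < n \<and> reach K n' + int (m K) < int n * int (d 1) \<and>
     (\<forall>i\<in>{1..N}. 2 * (int (m K) + slack i) \<le> int n) \<and>
     (\<forall>i\<in>{1..N}. \<forall>i'\<in>{1..N}.
        (\<bar>lam i\<bar> powr real n' * decay i' (2 * (int (m K) + slack i')) n) powr p * lp_sum p (z K i') \<le> eps K) \<and>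
     (\<forall>i\<in>{1..N}. \<forall>i'\<in>{1..N}. i < i' \<longrightarrow>
        (\<bar>lam i\<bar> powr real n * decay i' (2 * (int (m K) + slack i')) n) powr p * lp_sum p (z K i') \<le> eps K) \<and>
     (\<forall>i\<in>{1..N}. decay i (2 * (reach K n' + slack i)) n powr p * 2 \<le> eps K)"

lemma p_pos: "0 < p"
  using p_ge_1 by simp

lemma lam_nonzero: "i \<in> {1..N} \<Longrightarrow> lam i \<noteq> 0"
  using lam_gt_1 by force

lemma d_1_le: "i \<in> {1..N} \<Longrightarrow> d 1 \<le> d i"
  using d_gap[of 1 i] N_pos by (cases "i = 1") auto

lemma d_le_d_N: "i \<in> {1..N} \<Longrightarrow> d i \<le> d N"
  using d_gap[of i N] N_pos by (cases "i = N") auto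

lemma eps_pos: "0 < eps K"
  using N_pos by (simp add: eps_def)

lemma decay_nonneg: "0 \<le> decay i c n"
  by (simp add: decay_def)

lemma decay_tendsto_zero: "i \<in> {1..N} \<Longrightarrow> ((\<lambda>n. decay i c n) \<longlongrightarrow> 0) sequentially"
  unfolding decay_def by (rule powr_minus_tendsto_zero) (rule lam_gt_1)

lemma eventually_admissible: "eventually (\<lambda>n. admissible K n' n) sequentially"
proof -
  let ?c = "\<lambda>i. 2 * (int (m K) + slack i)"
  have d_1: "int n \<le> int n * int (d 1)" for n
    using mult_left_mono[of 1 "int (d 1)" "int n"] d_pos[of 1] N_pos by simp
  have "eventually (\<lambda>n. n' < n) sequentially" by (rule eventually_gt_at_top)
  moreover have "eventually (\<lambda>n. reach K n' + int (m K) < int n) sequentially"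
    using eventually_gt_at_top[of "nat (reach K n' + int (m K))"] by (rule eventually_mono) linarith
  moreover have "eventually (\<lambda>n. \<forall>i\<in>{1..N}. ?c i \<le> int n) sequentially"
  proof (intro eventually_ball_finite ballI finite_atLeastAtMost)
    fix i show "eventually (\<lambda>n. ?c i \<le> int n) sequentially"
      using eventually_ge_at_top[of "nat (?c i)"] by (rule eventually_mono) linarith
  qed
  moreover have "eventually (\<lambda>n. \<forall>i\<in>{1..N}. \<forall>i'\<in>{1..N}.
      (\<bar>lam i\<bar> powr real n' * decay i' (?c i') n) powr p * lp_sum p (z K i') \<le> eps K) sequentially"
    using decay_tendsto_zero
    by (intro eventually_ball_finite ballI eventually_powr_mult_le eps_pos p_pos tendsto_mult_right_zero)
      (auto simp: decay_nonneg)
  moreover have "eventually (\<lambda>n. \<forall>i\<in>{1..N}. \<forall>i'\<in>{1..N}. i < i' \<longrightarrow>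
      (\<bar>lam i\<bar> powr real n * decay i' (?c i') n) powr p * lp_sum p (z K i') \<le> eps K) sequentially"
  proof (intro eventually_ball_finite ballI finite_atLeastAtMost)
    fix i i' assume "i \<in> {1..N}" "i' \<in> {1..N}"
    then show "eventually (\<lambda>n. i < i' \<longrightarrow>
        (\<bar>lam i\<bar> powr real n * decay i' (?c i') n) powr p * lp_sum p (z K i') \<le> eps K) sequentially"
      using lam_gt_1[of i] lam_less[of i i']
      by (cases "i < i'") (auto simp: decay_def decay_nonneg eps_pos p_pos
          intro!: eventually_powr_mult_le powr_ratio_tendsto_zero)
  qed
  moreover have "eventually (\<lambda>n. \<forall>i\<in>{1..N}. decay i (2 * (reach K n' + slack i)) n powr p * 2 \<le> eps K)
      sequentially"
    using decay_tendsto_zero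
    by (intro eventually_ball_finite ballI eventually_powr_mult_le eps_pos p_pos) (auto simp: decay_nonneg)
  ultimately show ?thesis
    unfolding admissible_def by eventually_elim (use d_1 in \<open>auto intro: less_le_trans\<close>)
qed

primrec hit :: "nat \<Rightarrow> nat" where
  "hit 0 = (SOME n. admissible 0 0 n)"
| "hit (Suc K) = (SOME n. admissible (Suc K) (hit K) n)"

definition prev_hit :: "nat \<Rightarrow> nat" where
  "prev_hit K = (case K of 0 \<Rightarrow> 0 | Suc k \<Rightarrow> hit k)"

lemma admissible_hit: "admissible K (prev_hit K) (hit K)"
proof -
  have "\<exists>n. admissible K' n' n" for K' n'
    using eventually_admissible[of K' n'] by (simp add: eventually_sequentially) blast
  then show ?thesis by (cases K) (auto simp: prev_hit_def intro: someI_ex)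
qed

lemma hit_le_prev_hit:
  assumes "k < K"
  shows "hit k \<le> prev_hit K"
proof -
  obtain K' where K': "K = Suc K'" "k \<le> K'" using assms by (cases K) auto
  have "hit n \<le> hit (Suc n)" for n
    using admissible_hit[of "Suc n"] by (simp add: admissible_def prev_hit_def)
  then have "hit k \<le> hit K'" using K'(2) by (rule lift_Suc_mono_le)
  then show ?thesis by (simp add: K'(1) prev_hit_def)
qed

definition piece :: "nat \<Rightarrow> nat \<Rightarrow> int \<Rightarrow> real" where
  "piece K i b = (if i \<in> {1..N} then
     lam i powi (E i (b - int (hit K) * int (d i)) - E i b) * z K i (b - int (hit K) * int (d i)) else 0)"

definition block_end :: "nat \<Rightarrow> int" where
  "block_end K = int (hit K) * int (d N) + int (m K)"

lemma piece_nonzeroD: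
  assumes "piece K i b \<noteq> 0"
  shows "i \<in> {1..N}" "\<bar>b - int (hit K) * int (d i)\<bar> \<le> int (m K)"
  using assms z_support by (auto simp: piece_def split: if_splits)

lemma piece_nonzero_range:
  assumes "piece K i b \<noteq> 0"
  shows "reach K (prev_hit K) < b" "b \<le> block_end K"
proof -
  note i = piece_nonzeroD[OF assms]
  have "reach K (prev_hit K) + int (m K) < int (hit K) * int (d 1)"
    using admissible_hit[of K] by (simp add: admissible_def)
  moreover have "int (hit K) * int (d 1) \<le> int (hit K) * int (d i)"
    using d_1_le[OF i(1)] by (intro mult_left_mono) auto
  ultimately show "reach K (prev_hit K) < b" using i(2) by linarith
  have "int (hit K) * int (d i) \<le> int (hit K) * int (d N)"
    using d_le_d_N[OF i(1)] by (intro mult_left_mono) auto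
  then show "b \<le> block_end K" using i(2) by (simp add: block_end_def)
qed

lemma block_end_le_reach:
  assumes "k < K"
  shows "block_end k \<le> reach K (prev_hit K)"
proof -
  have "int (hit k) * int (d N) \<le> int (prev_hit K) * int (d N)"
    using hit_le_prev_hit[OF assms] by (intro mult_right_mono) auto
  moreover have "int (m k) \<le> (\<Sum>k'<K. int (m k'))"
    using assms by (intro member_le_sum) auto
  ultimately show ?thesis by (simp add: block_end_def reach_def)
qed

lemma pieces_disjoint:
  assumes "piece k i b \<noteq> 0" "piece k' i' b \<noteq> 0"
  shows "k = k'" "i = i'"
proof -
  show kk: "k = k'"
    using piece_nonzero_range[OF assms(1)] piece_nonzero_range[OF assms(2)]
      block_end_le_reach[of k k'] block_end_le_reach[of k' k]
    by (cases k k' rule: linorder_cases) auto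
  have False if "piece k a b \<noteq> 0" "piece k c b \<noteq> 0" "a < c" for a c
  proof -
    note a = piece_nonzeroD[OF that(1)] and c = piece_nonzeroD[OF that(2)]
    have "2 * (int (m k) + slack a) \<le> int (hit k)"
      using admissible_hit[of k] a(1) by (simp add: admissible_def)
    moreover have "0 < slack a" using d_pos[OF a(1)] by (simp add: slack_def)
    moreover have "int (hit k) * (int (d a) + 1) \<le> int (hit k) * int (d c)"
      using d_gap[OF a(1) c(1) that(3)] by (intro mult_left_mono) auto
    ultimately show False using a(2) c(2) by (simp add: algebra_simps)
  qed
  then show "i = i'" using assms kk by (metis linorder_neqE_nat)
qed

lemma abs_piece_le:
  assumes i: "i \<in> {1..N}"
  shows "\<bar>piece K i b\<bar> \<le> decay i (2 * (int (m K) + slack i)) (hit K) * \<bar>z K i (b - int (hit K) * int (d i))\<bar>"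
proof (cases "z K i (b - int (hit K) * int (d i)) = 0")
  case False
  define r where "r = b - int (hit K) * int (d i)"
  have "\<bar>r\<bar> \<le> int (m K)" using z_support False by (simp add: r_def)
  then have "E i r - E i (r + int (hit K) * int (d i)) \<le> 2 * (int (m K) + slack i) - int (hit K)"
    by (intro weight_exponent_diff_le d_pos[OF i]) (auto simp: slack_def)
  then have "\<bar>lam i\<bar> powr real_of_int (E i r - E i b) \<le> decay i (2 * (int (m K) + slack i)) (hit K)"
    using lam_gt_1[OF i] by (simp add: decay_def r_def)
  then show ?thesis
    using i lam_nonzero[OF i]
    by (simp add: piece_def r_def[symmetric] abs_mult abs_power_int_eq_powr mult_right_mono)
qed (simp add: piece_def)

lemma z_lp: "z K i \<in> lp p"
  by (rule lp_if_bounded_support) (rule z_support)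

lemma piece_lp:
  assumes i: "i \<in> {1..N}"
  shows "piece K i \<in> lp p"
    "lp_sum p (piece K i) \<le> decay i (2 * (int (m K) + slack i)) (hit K) powr p * lp_sum p (z K i)"
proof -
  have "bij (\<lambda>b::int. b - int (hit K) * int (d i))"
    by (rule bij_betwI[where g="\<lambda>b. b + int (hit K) * int (d i)"]) auto
  from lp_sum_le_scaled[OF z_lp _ decay_nonneg this abs_piece_le[OF i]] p_pos
  show "piece K i \<in> lp p"
    "lp_sum p (piece K i) \<le> decay i (2 * (int (m K) + slack i)) (hit K) powr p * lp_sum p (z K i)"
    by simp_all
qed

lemma wshift_power_piece:
  assumes i: "i \<in> {1..N}"
  shows "(T i ^^ hit K) (piece K i) = z K i"
proof
  fix j
  define e where "e = E i (j + int (hit K) * int (d i)) - E i j"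
  have "lam i powi e * lam i powi (E i j - E i (j + int (hit K) * int (d i))) = 1"
    using lam_nonzero[OF i] by (simp add: e_def flip: power_int_add)
  then show "(T i ^^ hit K) (piece K i) j = z K i j"
    using i by (simp add: wshift_power d_pos lam_nonzero piece_def e_def[symmetric] mult.assoc[symmetric])
qed

lemma wshift_power_piece_small:
  assumes i: "i \<in> {1..N}" and i': "i' \<in> {1..N}" and n: "n \<le> prev_hit K"
  shows "lp_sum p ((T i ^^ n) (piece K i')) \<le> eps K"
proof -
  let ?D = "decay i' (2 * (int (m K) + slack i')) (hit K)"
  have "lp_sum p ((T i ^^ n) (piece K i')) \<le> (\<bar>lam i\<bar> powr real n) powr p * lp_sum p (piece K i')"
    using lam_gt_1[OF i] p_pos by (intro wshift_power_lp piece_lp i') auto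
  also have "\<dots> \<le> (\<bar>lam i\<bar> powr real (prev_hit K)) powr p * (?D powr p * lp_sum p (z K i'))"
    using lam_gt_1[OF i] n p_pos piece_lp(2)[OF i'] lp_sum_nonneg
    by (intro mult_mono powr_mono2 powr_mono) auto
  also have "\<dots> = (\<bar>lam i\<bar> powr real (prev_hit K) * ?D) powr p * lp_sum p (z K i')"
    by (simp add: powr_mult decay_nonneg)
  also have "\<dots> \<le> eps K"
    using admissible_hit[of K] i i' unfolding admissible_def by blast
  finally show ?thesis .
qed

lemma piece_small: "i \<in> {1..N} \<Longrightarrow> lp_sum p (piece K i) \<le> eps K"
  using wshift_power_piece_small[of 1 i 0 K] N_pos by simp

definition dhc_vector :: "int \<Rightarrow> real" where
  "dhc_vector b = (\<Sum>\<^sub>\<infinity>(K, i)\<in>UNIV \<times> {1..N}. piece K i b)"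

lemma dhc_vector_eq_piece:
  assumes "piece K i b \<noteq> 0"
  shows "dhc_vector b = piece K i b"
proof -
  have "dhc_vector b = (\<Sum>\<^sub>\<infinity>(K', i')\<in>{(K, i)}. piece K' i' b)"
    unfolding dhc_vector_def
    by (rule infsum_cong_neutral) (use pieces_disjoint[OF assms] piece_nonzeroD(1)[OF assms] in auto)
  then show ?thesis by simp
qed

lemma dhc_vector_nonzeroE:
  assumes "dhc_vector b \<noteq> 0"
  obtains K i where "piece K i b \<noteq> 0"
proof -
  have ex: "\<exists>K i. piece K i b \<noteq> 0"
  proof (rule ccontr)
    assume "\<nexists>K i. piece K i b \<noteq> 0"
    then have "dhc_vector b = 0" unfolding dhc_vector_def by (intro infsum_0) auto
    with assms show False by simp
  qed
  show ?thesis using ex that by blast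
qed

lemma sum_lp_sum_piece_le:
  assumes "finite A" "A \<subseteq> UNIV \<times> {1..N}"
  shows "(\<Sum>(K, i)\<in>A. lp_sum p (piece K i)) \<le> 2"
proof -
  have "(\<Sum>(K, i)\<in>A. lp_sum p (piece K i)) \<le> real (card {1..N}) * (\<Sum>K\<in>fst ` A. eps K)"
    using assms piece_small eps_pos by (intro sum_le_card_mult_sum_fst) (auto simp: less_imp_le)
  also have "\<dots> = (\<Sum>K\<in>fst ` A. (1/2) ^ K)"
    using N_pos by (simp add: eps_def sum_distrib_left)
  also have "\<dots> \<le> 2"
    using assms(1) by (intro sum_half_power_le) auto
  finally show ?thesis .
qed

lemma dhc_vector_lp: "dhc_vector \<in> lp p"
proof (rule lp_sum_le_of_pieces(1))
  show "(\<lambda>(K, i). piece K i) a \<in> lp p" if "a \<in> UNIV \<times> {1..N}" for a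
    using that piece_lp(1) by auto
  show "(\<Sum>a\<in>A. lp_sum p ((\<lambda>(K, i). piece K i) a)) \<le> 2"
    if "finite A" "A \<subseteq> UNIV \<times> {1..N}" for A
    using sum_lp_sum_piece_le[OF that] by (simp add: case_prod_unfold)
  show "\<exists>a\<in>UNIV \<times> {1..N}. dhc_vector b = (\<lambda>(K, i). piece K i) a b" if nz: "dhc_vector b \<noteq> 0" for b
  proof -
    obtain K i where "piece K i b \<noteq> 0" using nz by (rule dhc_vector_nonzeroE)
    then show ?thesis using piece_nonzeroD(1) dhc_vector_eq_piece by fastforce
  qed
qed

lemma orbit_error_cover:
  assumes i: "i \<in> {1..N}" and ne: "(T i ^^ hit K) dhc_vector j - z K i j \<noteq> 0"
  shows "\<exists>a\<in>UNIV \<times> {1..N} - {(K, i)}.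
    (T i ^^ hit K) dhc_vector j - z K i j = (\<lambda>(k, i'). (T i ^^ hit K) (piece k i')) a j"
proof -
  define b where "b = j + int (hit K) * int (d i)"
  define c where "c = lam i powi (E i b - E i j)"
  have orbit: "(T i ^^ hit K) u j = c * u b" for u
    using i by (simp add: wshift_power d_pos lam_nonzero c_def b_def)
  have target: "z K i j = c * piece K i b"
    using fun_cong[OF wshift_power_piece[OF i, of K], of j] orbit by simp
  have "piece K i b = 0"
    using ne orbit target dhc_vector_eq_piece[of K i b] by auto
  moreover have "dhc_vector b \<noteq> 0" using ne orbit target calculation by auto
  then obtain k i' where k: "piece k i' b \<noteq> 0" by (rule dhc_vector_nonzeroE)
  ultimately have "(k, i') \<in> UNIV \<times> {1..N} - {(K, i)}" using piece_nonzeroD(1)[OF k] by auto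
  then show ?thesis
    by (intro bexI[of _ "(k, i')"]) (simp_all add: orbit target \<open>piece K i b = 0\<close> dhc_vector_eq_piece[OF k])
qed

lemma earlier_block_interference:
  assumes i: "i \<in> {1..N}" and i': "i' \<in> {1..N}" and k: "k < K"
  shows "lp_sum p ((T i ^^ hit K) (piece k i'))
    \<le> decay i (2 * (reach K (prev_hit K) + slack i)) (hit K) powr p * lp_sum p (piece k i')"
proof -
  let ?F = "decay i (2 * (reach K (prev_hit K) + slack i)) (hit K)"
  let ?X = "int (hit K) * int (d i)"
  have "\<bar>(T i ^^ hit K) (piece k i') j\<bar> \<le> ?F * \<bar>piece k i' (j + ?X)\<bar>" for j
  proof (cases "piece k i' (j + ?X) = 0")
    case False
    define b where "b = j + ?X"
    have "0 \<le> reach k (prev_hit k)" by (simp add: reach_def sum_nonneg)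
    moreover have "reach k (prev_hit k) < b" "b \<le> reach K (prev_hit K)"
      using piece_nonzero_range[OF False] block_end_le_reach[OF k] by (auto simp: b_def)
    ultimately
    have "E i b - E i (b - ?X) \<le> 2 * (reach K (prev_hit K) + slack i) - int (hit K)"
      by (intro weight_exponent_diff_le d_pos[OF i]) (auto simp: slack_def)
    then have "\<bar>lam i\<bar> powr real_of_int (E i b - E i j) \<le> ?F"
      using lam_gt_1[OF i] by (simp add: decay_def b_def)
    then show ?thesis
      using i by (simp add: wshift_power d_pos lam_nonzero abs_mult abs_power_int_eq_powr
          b_def[symmetric] mult_right_mono)
  qed (use i in \<open>simp add: wshift_power d_pos lam_nonzero\<close>)
  moreover have "bij (\<lambda>j. j + ?X)" by (rule bij_betwI[where g="\<lambda>j. j - ?X"]) auto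
  ultimately show ?thesis
    using lp_sum_le_scaled(2)[OF piece_lp(1)[OF i'] _ decay_nonneg] p_pos by simp
qed

lemma same_block_interference_less:
  assumes i: "i \<in> {1..N}" and i': "i' \<in> {1..N}" and less: "i < i'"
  shows "lp_sum p ((T i ^^ hit K) (piece K i')) \<le> eps K"
proof -
  let ?D = "decay i' (2 * (int (m K) + slack i')) (hit K)"
  let ?F = "\<bar>lam i\<bar> powr real (hit K) * ?D"
  let ?s = "int (hit K) * int (d i) - int (hit K) * int (d i')"
  have "\<bar>(T i ^^ hit K) (piece K i') j\<bar> \<le> ?F * \<bar>z K i' (j + ?s)\<bar>" for j
  proof -
    have "\<bar>(T i ^^ hit K) (piece K i') j\<bar>
        \<le> \<bar>lam i\<bar> powr real (hit K) * \<bar>piece K i' (j + int (hit K) * int (d i))\<bar>"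
      using d_pos[OF i] lam_gt_1[OF i] by (intro wshift_power_abs_le) auto
    also have "\<bar>piece K i' (j + int (hit K) * int (d i))\<bar> \<le> ?D * \<bar>z K i' (j + ?s)\<bar>"
      using abs_piece_le[OF i', of K "j + int (hit K) * int (d i)"] by (simp add: algebra_simps)
    then have "\<bar>lam i\<bar> powr real (hit K) * \<bar>piece K i' (j + int (hit K) * int (d i))\<bar>
        \<le> \<bar>lam i\<bar> powr real (hit K) * (?D * \<bar>z K i' (j + ?s)\<bar>)"
      by (rule mult_left_mono) simp
    finally show ?thesis by (simp add: algebra_simps)
  qed
  moreover have "bij (\<lambda>j. j + ?s)" by (rule bij_betwI[where g="\<lambda>j. j - ?s"]) auto
  moreover have "0 \<le> ?F" by (simp add: decay_nonneg)
  ultimately have "lp_sum p ((T i ^^ hit K) (piece K i')) \<le> ?F powr p * lp_sum p (z K i')"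
    using lp_sum_le_scaled(2)[OF z_lp] p_pos by simp
  also have "\<dots> \<le> eps K"
    using admissible_hit[of K] i i' less unfolding admissible_def by blast
  finally show ?thesis .
qed

lemma abs_wshift_power_piece_overshoot_le:
  assumes i: "i \<in> {1..N}" and i': "i' \<in> {1..N}" and greater: "i' < i"
  shows "\<bar>(T i ^^ hit K) (piece K i') j\<bar>
    \<le> decay i' (2 * (int (m K) + slack i')) (hit K)
      * \<bar>z K i' (j + (int (hit K) * int (d i) - int (hit K) * int (d i')))\<bar>"
proof (cases "z K i' (j + (int (hit K) * int (d i) - int (hit K) * int (d i'))) = 0")
  case False
  let ?X = "int (hit K) * int (d i)" and ?X' = "int (hit K) * int (d i')"
  define r where "r = j + (?X - ?X')"
  have "\<bar>r\<bar> \<le> int (m K)" using z_support False by (simp add: r_def)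
  moreover have "2 * (int (m K) + slack i) \<le> int (hit K)"
    using admissible_hit[of K] i by (simp add: admissible_def)
  moreover have "2 * ?X' + int (hit K) \<le> ?X"
    using mult_left_mono[of "2 * int (d i') + 1" "int (d i)" "int (hit K)"] d_gap[OF i' i greater]
    by (simp add: algebra_simps)
  moreover have "0 \<le> ?X'" by simp
  \<comment> \<open>the piece ends up farther from the origin than it started, so the weights multiply to at most 1\<close>
  ultimately have "\<bar>r + ?X'\<bar> - \<bar>r + ?X' - ?X\<bar> + 2 * (\<bar>l i\<bar> + int (d i)) \<le> 0"
    unfolding slack_def by (smt (verit))
  then have "E i (r + ?X') - E i (r + ?X' - ?X) \<le> 0"
    using weight_exponent_diff_le[OF d_pos[OF i], of 0 "r + ?X'" "r + ?X' - ?X" "l i" 0] by simp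
  then have "\<bar>lam i\<bar> powr real_of_int (E i (r + ?X') - E i (r + ?X' - ?X)) \<le> \<bar>lam i\<bar> powr 0"
    using lam_gt_1[OF i] by (intro powr_mono) auto
  then have "\<bar>(T i ^^ hit K) (piece K i') j\<bar> \<le> \<bar>piece K i' (r + ?X')\<bar>"
    using i lam_gt_1[OF i]
    by (simp add: wshift_power d_pos lam_nonzero abs_mult abs_power_int_eq_powr r_def mult_left_le_one_le)
  also have "\<dots> \<le> decay i' (2 * (int (m K) + slack i')) (hit K) * \<bar>z K i' r\<bar>"
    using abs_piece_le[OF i', of K "r + ?X'"] by simp
  finally show ?thesis by (simp add: r_def)
next
  case True
  then show ?thesis
    using i i' by (simp add: wshift_power d_pos lam_nonzero piece_def algebra_simps)
qed

lemma same_block_interference_greater: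
  assumes i: "i \<in> {1..N}" and i': "i' \<in> {1..N}" and greater: "i' < i"
  shows "lp_sum p ((T i ^^ hit K) (piece K i')) \<le> eps K"
proof -
  let ?D = "decay i' (2 * (int (m K) + slack i')) (hit K)"
  let ?s = "int (hit K) * int (d i) - int (hit K) * int (d i')"
  have "bij (\<lambda>j. j + ?s)" by (rule bij_betwI[where g="\<lambda>j. j - ?s"]) auto
  then have "lp_sum p ((T i ^^ hit K) (piece K i')) \<le> ?D powr p * lp_sum p (z K i')"
    using lp_sum_le_scaled(2)[OF z_lp _ decay_nonneg _ abs_wshift_power_piece_overshoot_le[OF i i' greater]]
      p_pos by simp
  also have "\<dots> \<le> (\<bar>lam i\<bar> powr real (prev_hit K) * ?D) powr p * lp_sum p (z K i')"
  proof -
    have "1 * ?D \<le> \<bar>lam i\<bar> powr real (prev_hit K) * ?D"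
      using ge_one_powr_ge_zero[of "\<bar>lam i\<bar>" "real (prev_hit K)"] lam_gt_1[OF i] decay_nonneg
      by (intro mult_right_mono) auto
    then show ?thesis using p_pos lp_sum_nonneg decay_nonneg by (intro mult_right_mono powr_mono2) auto
  qed
  also have "\<dots> \<le> eps K"
    using admissible_hit[of K] i i' unfolding admissible_def by blast
  finally show ?thesis .
qed

lemma card_mult_sum_eps: "real (card {1..N}) * (\<Sum>k\<in>F. eps k) = (\<Sum>k\<in>F. (1/2) ^ k)"
  using N_pos by (simp add: eps_def sum_distrib_left)

lemma eps_le: "eps K \<le> (1/2) ^ K"
  using N_pos by (simp add: eps_def divide_le_eq)

lemma earlier_blocks_sum_le:
  assumes i: "i \<in> {1..N}" and A: "finite A" "A \<subseteq> {..<K} \<times> {1..N}"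
  shows "(\<Sum>(k, i')\<in>A. lp_sum p ((T i ^^ hit K) (piece k i'))) \<le> (1/2) ^ K"
proof -
  let ?F = "decay i (2 * (reach K (prev_hit K) + slack i)) (hit K)"
  have "(\<Sum>(k, i')\<in>A. lp_sum p ((T i ^^ hit K) (piece k i')))
      \<le> (\<Sum>(k, i')\<in>A. ?F powr p * lp_sum p (piece k i'))"
    using A(2) earlier_block_interference[OF i] by (intro sum_mono) auto
  also have "\<dots> = ?F powr p * (\<Sum>(k, i')\<in>A. lp_sum p (piece k i'))"
    by (simp add: sum_distrib_left case_prod_unfold)
  also have "\<dots> \<le> ?F powr p * 2"
    using A by (intro mult_left_mono sum_lp_sum_piece_le) auto
  also have "\<dots> \<le> eps K"
    using admissible_hit[of K] i unfolding admissible_def by blast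
  finally show ?thesis using eps_le[of K] by linarith
qed

lemma same_block_sum_le:
  assumes i: "i \<in> {1..N}" and A: "finite A" "A \<subseteq> {K} \<times> ({1..N} - {i})"
  shows "(\<Sum>(k, i')\<in>A. lp_sum p ((T i ^^ hit K) (piece k i'))) \<le> (1/2) ^ K"
proof -
  have "lp_sum p ((T i ^^ hit K) (piece k i')) \<le> eps k" if "(k, i') \<in> A" for k i'
  proof -
    from that A(2) have "k = K" "i' \<in> {1..N}" "i' \<noteq> i" by auto
    then show ?thesis using same_block_interference_less[OF i] same_block_interference_greater[OF i]
      by (cases i i' rule: linorder_cases) auto
  qed
  then have "(\<Sum>(k, i')\<in>A. lp_sum p ((T i ^^ hit K) (piece k i'))) \<le> real (card {1..N}) * (\<Sum>k\<in>fst ` A. eps k)"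
    using A eps_pos by (intro sum_le_card_mult_sum_fst) (auto intro: less_imp_le)
  also have "\<dots> \<le> real (card {1..N}) * (\<Sum>k\<in>{K}. eps k)"
    using A eps_pos by (intro mult_left_mono sum_mono2) (auto intro: less_imp_le)
  also have "\<dots> = (1/2) ^ K" by (simp only: card_mult_sum_eps) simp
  finally show ?thesis .
qed

lemma later_blocks_sum_le:
  assumes i: "i \<in> {1..N}" and A: "finite A" "A \<subseteq> {K<..} \<times> {1..N}"
  shows "(\<Sum>(k, i')\<in>A. lp_sum p ((T i ^^ hit K) (piece k i'))) \<le> (1/2) ^ K"
proof -
  have "(\<Sum>(k, i')\<in>A. lp_sum p ((T i ^^ hit K) (piece k i'))) \<le> real (card {1..N}) * (\<Sum>k\<in>fst ` A. eps k)"
    using A eps_pos wshift_power_piece_small[OF i _ hit_le_prev_hit]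
    by (intro sum_le_card_mult_sum_fst) (auto intro: less_imp_le)
  also have "\<dots> = (\<Sum>k\<in>fst ` A. (1/2) ^ k)" by (rule card_mult_sum_eps)
  also have "\<dots> \<le> (1/2) ^ K" using A by (intro sum_half_power_above_le) auto
  finally show ?thesis .
qed

lemma orbit_error_le:
  assumes i: "i \<in> {1..N}"
  shows "(\<lambda>j. (T i ^^ hit K) dhc_vector j - z K i j) \<in> lp p"
    "lp_sum p (\<lambda>j. (T i ^^ hit K) dhc_vector j - z K i j) \<le> 3 * (1/2) ^ K"
proof -
  let ?B = "UNIV \<times> {1..N} - {(K, i)}"
  let ?v = "\<lambda>(k, i'). (T i ^^ hit K) (piece k i')"
  have pieces: "?v a \<in> lp p" if "a \<in> ?B" for a
    using that lam_gt_1[OF i] p_pos by (auto intro!: wshift_power_lp piece_lp)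
  have sums: "(\<Sum>a\<in>A. lp_sum p (?v a)) \<le> 3 * (1/2) ^ K" if A: "finite A" "A \<subseteq> ?B" for A
  proof -
    let ?f = "\<lambda>a. lp_sum p (?v a)"
    define A1 where "A1 = {a \<in> A. fst a < K}"
    define A2 where "A2 = {a \<in> A. fst a = K}"
    define A3 where "A3 = {a \<in> A. K < fst a}"
    have A_eq: "A = A1 \<union> A2 \<union> A3" by (auto simp: A1_def A2_def A3_def)
    have fin: "finite A1" "finite A2" "finite A3" using A(1) by (simp_all add: A1_def A2_def A3_def)
    have disj: "A1 \<inter> A2 = {}" "(A1 \<union> A2) \<inter> A3 = {}" by (auto simp: A1_def A2_def A3_def)
    have "(\<Sum>a\<in>A. ?f a) = (\<Sum>a\<in>A1. ?f a) + (\<Sum>a\<in>A2. ?f a) + (\<Sum>a\<in>A3. ?f a)"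
      unfolding A_eq by (simp add: sum.union_disjoint fin disj)
    also have "\<dots> \<le> (1/2) ^ K + (1/2) ^ K + (1/2) ^ K"
      using A unfolding case_prod_unfold
      by (intro add_mono earlier_blocks_sum_le[OF i, unfolded case_prod_unfold]
          same_block_sum_le[OF i, unfolded case_prod_unfold]
          later_blocks_sum_le[OF i, unfolded case_prod_unfold]) (auto simp: A1_def A2_def A3_def)
    finally show ?thesis by simp
  qed
  show "(\<lambda>j. (T i ^^ hit K) dhc_vector j - z K i j) \<in> lp p"
    "lp_sum p (\<lambda>j. (T i ^^ hit K) dhc_vector j - z K i j) \<le> 3 * (1/2) ^ K"
    using lp_sum_le_of_pieces[OF pieces sums orbit_error_cover[OF i]] by blast+
qed

end

section \<open>Disjoint hypercyclicity\<close>

lemma lp_norm_add_less: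
  assumes "u \<in> lp p" "v \<in> lp p" "0 < p" "0 < \<epsilon>"
    "lp_sum p u < \<epsilon> powr p / 2 powr (p + 1)" "lp_sum p v < \<epsilon> powr p / 2 powr (p + 1)"
  shows "lp_norm p (\<lambda>j. u j + v j) < \<epsilon>"
proof -
  have "lp_sum p (\<lambda>j. u j + v j) \<le> 2 powr p * (lp_sum p u + lp_sum p v)"
    using lp_sum_add_le(2)[OF assms(1,2)] assms(3) by simp
  also have "\<dots> < 2 powr p * (2 * (\<epsilon> powr p / 2 powr (p + 1)))"
    using assms(5,6) by (intro mult_strict_left_mono) auto
  also have "\<dots> = \<epsilon> powr p" by (simp add: powr_add)
  finally have "lp_sum p (\<lambda>j. u j + v j) powr (1 / p) < (\<epsilon> powr p) powr (1 / p)"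
    using assms(3) lp_sum_nonneg by (intro powr_less_mono2) auto
  then show ?thesis using assms(3,4) by (simp add: lp_norm_eq_lp_sum powr_powr)
qed

context dhc_construction
begin

lemma orbit_approximates:
  assumes i: "i \<in> {1..N}" and y: "y \<in> lp p" and \<epsilon>: "0 < \<epsilon>"
    and close: "lp_sum p (\<lambda>j. z K i j - y j) < \<epsilon> powr p / 2 powr (p + 1)"
    and K: "3 * (1/2) ^ K < \<epsilon> powr p / 2 powr (p + 1)"
  shows "lp_norm p ((T i ^^ hit K) dhc_vector - y) < \<epsilon>"
proof -
  have "(\<lambda>j. z K i j - y j) \<in> lp p"
    using lp_sum_add_le(1)[OF z_lp, of "\<lambda>j. - y j"] y p_pos by (simp add: lp_def)
  moreover have "lp_sum p (\<lambda>j. (T i ^^ hit K) dhc_vector j - z K i j) < \<epsilon> powr p / 2 powr (p + 1)"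
    using orbit_error_le(2)[OF i, of K] K by linarith
  ultimately have "lp_norm p (\<lambda>j. ((T i ^^ hit K) dhc_vector j - z K i j) + (z K i j - y j)) < \<epsilon>"
    by (rule lp_norm_add_less[OF orbit_error_le(1)[OF i] _ p_pos \<epsilon> _ close])
  moreover have "(T i ^^ hit K) dhc_vector - y = (\<lambda>j. ((T i ^^ hit K) dhc_vector j - z K i j) + (z K i j - y j))"
    by (rule ext) simp
  ultimately show ?thesis by simp
qed

end

theorem disjoint_hypercyclic_wshift:
  fixes p :: real and N :: nat and d :: "nat \<Rightarrow> nat" and l :: "nat \<Rightarrow> int" and lam :: "nat \<Rightarrow> real"
  assumes "1 \<le> p" "1 \<le> N"
    and "\<And>i. i \<in> {1..N} \<Longrightarrow> 0 < d i"
    and "\<And>s t. s \<in> {1..N} \<Longrightarrow> t \<in> {1..N} \<Longrightarrow> s < t \<Longrightarrow> 2 * d s < d t"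
    and "\<And>s t. s \<in> {1..N} \<Longrightarrow> t \<in> {1..N} \<Longrightarrow> s < t \<Longrightarrow> \<bar>lam s\<bar> < \<bar>lam t\<bar>"
    and "\<And>i. i \<in> {1..N} \<Longrightarrow> 1 < \<bar>lam i\<bar>"
  shows "disjoint_hypercyclic_lp p N (\<lambda>i. wshift (d i) (l i) (lam i))"
proof -
  \<comment> \<open>every code recurs at arbitrarily large indices \<open>K\<close>\<close>
  define code where "code K = (from_nat (fst (prod_decode K)) :: nat \<times> rat list list)" for K
  interpret dhc_construction p N d l lam "\<lambda>K. finite_target (code K)" "\<lambda>K. fst (code K)"
    using assms finite_target_support by unfold_locales auto
  show ?thesis unfolding disjoint_hypercyclic_lp_def
  proof (intro bexI[of _ dhc_vector] allI impI dhc_vector_lp)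
    fix y :: "nat \<Rightarrow> int \<Rightarrow> real" and \<epsilon> :: real
    assume y: "\<forall>i\<in>{1..N}. y i \<in> lp p" and \<epsilon>: "0 < \<epsilon>"
    define \<eta> where "\<eta> = \<epsilon> powr p / 2 powr (p + 1)"
    have \<eta>: "0 < \<eta>" using \<epsilon> by (simp add: \<eta>_def)
    obtain c where c: "\<forall>i\<in>{1..N}. lp_sum p (\<lambda>j. finite_target c i j - y i j) < \<eta>"
      using finite_targets_dense[OF y p_pos \<eta>] by blast
    obtain b where b: "(1/2::real) ^ b < \<eta> / 3"
      using real_arch_pow_inv[of "\<eta> / 3" "1/2"] \<eta> by auto
    define K where "K = prod_encode (to_nat c, b)"
    have "(1/2::real) ^ K \<le> (1/2) ^ b"
      by (intro power_decreasing) (auto simp: K_def le_prod_encode_2)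
    then have "3 * (1/2) ^ K < \<eta>" using b by linarith
    moreover have "code K = c" by (simp add: code_def K_def)
    ultimately show "\<exists>n. \<forall>i\<in>{1..N}. lp_norm p ((wshift (d i) (l i) (lam i) ^^ n) dhc_vector - y i) < \<epsilon>"
      using orbit_approximates y c \<epsilon> unfolding \<eta>_def by blast
  qed
qed

lemma lp_norm_reflect [simp]: "lp_norm p (reflect x) = lp_norm p x"
  by (simp add: lp_norm_eq_lp_sum)

theorem disjoint_hypercyclic_wshift_inverse:
  fixes p :: real and N :: nat and d :: "nat \<Rightarrow> nat" and l :: "nat \<Rightarrow> int" and lam :: "nat \<Rightarrow> real"
  assumes "1 \<le> p" "1 \<le> N"
    and "\<And>i. i \<in> {1..N} \<Longrightarrow> 0 < d i"
    and "\<And>s t. s \<in> {1..N} \<Longrightarrow> t \<in> {1..N} \<Longrightarrow> s < t \<Longrightarrow> 2 * d s < d t"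
    and "\<And>s t. s \<in> {1..N} \<Longrightarrow> t \<in> {1..N} \<Longrightarrow> s < t \<Longrightarrow> \<bar>lam s\<bar> < \<bar>lam t\<bar>"
    and lam: "\<And>i. i \<in> {1..N} \<Longrightarrow> 1 < \<bar>lam i\<bar>"
  shows "disjoint_hypercyclic_lp p N (\<lambda>i. inv_into (lp p) (wshift (d i) (l i) (lam i)))"
proof -
  let ?S = "\<lambda>i. wshift (d i) (int (d i) - l i - 1) (lam i)"
  have "disjoint_hypercyclic_lp p N ?S"
    using assms by (rule disjoint_hypercyclic_wshift)
  then obtain x where x: "x \<in> lp p" and orbit: "\<And>y. \<forall>i\<in>{1..N}. y i \<in> lp p \<Longrightarrow>
      \<forall>\<epsilon>>0. \<exists>n. \<forall>i\<in>{1..N}. lp_norm p ((?S i ^^ n) x - y i) < \<epsilon>"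
    unfolding disjoint_hypercyclic_lp_def by blast
  show ?thesis unfolding disjoint_hypercyclic_lp_def
  proof (intro bexI[of _ "reflect x"] allI impI)
    fix y :: "nat \<Rightarrow> int \<Rightarrow> real" and \<epsilon> :: real
    assume y: "\<forall>i\<in>{1..N}. y i \<in> lp p" and \<epsilon>: "0 < \<epsilon>"
    have "\<forall>i\<in>{1..N}. reflect (y i) \<in> lp p" using y by simp
    from orbit[OF this] \<epsilon>
    obtain n where n: "\<forall>i\<in>{1..N}. lp_norm p ((?S i ^^ n) x - reflect (y i)) < \<epsilon>" by blast
    have eq: "(inv_into (lp p) (wshift (d i) (l i) (lam i)) ^^ n) (reflect x) - y i
        = reflect ((?S i ^^ n) x - reflect (y i))" if "i \<in> {1..N}" for i
    proof -
      have "(inv_into (lp p) (wshift (d i) (l i) (lam i)) ^^ n) (reflect x) = reflect ((?S i ^^ n) x)"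
        using wshift_inv_power[where lam="lam i" and y="reflect x" and d="d i" and l="l i" and n=n]
          lam[OF that] assms(1) x by simp
      then show ?thesis by (simp add: reflect_def fun_eq_iff)
    qed
    show "\<exists>n. \<forall>i\<in>{1..N}. lp_norm p ((inv_into (lp p) (wshift (d i) (l i) (lam i)) ^^ n) (reflect x) - y i) < \<epsilon>"
    proof (intro exI[of _ n] ballI)
      fix i assume i: "i \<in> {1..N}"
      show "lp_norm p ((inv_into (lp p) (wshift (d i) (l i) (lam i)) ^^ n) (reflect x) - y i) < \<epsilon>"
        unfolding eq[OF i] lp_norm_reflect using n i by blast
    qed
  qed (use x in simp)
qed

lemma abs_gt_one_if_increasing:
  fixes lam :: "nat \<Rightarrow> real"
  assumes "2 \<le> N" and "\<forall>s\<in>{1..N}. \<forall>t\<in>{1..N}. s < t \<longrightarrow> 1 < \<bar>lam s\<bar> \<and> \<bar>lam s\<bar> < \<bar>lam t\<bar>"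
    and i: "i \<in> {1..N}"
  shows "1 < \<bar>lam i\<bar>"
proof (cases "i < N")
  case True
  moreover have "N \<in> {1..N}" using assms(1) by simp
  ultimately show ?thesis using assms(2) i by blast
next
  case False
  have "1 \<in> {1..N}" "N \<in> {1..N}" "1 < N" using assms(1) by auto
  then have "1 < \<bar>lam 1\<bar> \<and> \<bar>lam 1\<bar> < \<bar>lam N\<bar>" using assms(2) by blast
  moreover have "i = N" using False i by simp
  ultimately show ?thesis by simp
qed

theorem theorem2p5:
  fixes p :: real and N :: nat
    and d :: "nat \<Rightarrow> nat" and l :: "nat \<Rightarrow> int" and lam :: "nat \<Rightarrow> real"
    and w :: "nat \<Rightarrow> int \<Rightarrow> real" and T :: "nat \<Rightarrow> (int \<Rightarrow> real) \<Rightarrow> (int \<Rightarrow> real)"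
  assumes "1 \<le> p"
    and "N \<ge> 2"
    and "\<forall>i\<in>{1..N}. d i > 0"
    and "\<forall>s\<in>{1..N}. \<forall>t\<in>{1..N}. s < t \<longrightarrow> 2 * d s < d t"
    and "\<forall>s\<in>{1..N}. \<forall>t\<in>{1..N}. s < t \<longrightarrow> 1 < \<bar>lam s\<bar> \<and> \<bar>lam s\<bar> < \<bar>lam t\<bar>"
    and "\<forall>i n. w i n = (if n > l i then lam i else 1 / lam i)"
    and "\<forall>i. T i = pseudo_shift (\<lambda>n. n + int (d i)) (w i)"
  shows "(\<forall>i\<in>{1..N}. invertible_lp p (T i))
    \<and> disjoint_hypercyclic_lp p N T
    \<and> disjoint_hypercyclic_lp p N (\<lambda>i. inv_into (lp p) (T i))"
proof -
  have lam_gt_1: "\<And>i. i \<in> {1..N} \<Longrightarrow> 1 < \<bar>lam i\<bar>"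
    using abs_gt_one_if_increasing[OF assms(2,5)] .
  have T: "T = (\<lambda>i. wshift (d i) (l i) (lam i))"
    using assms(6,7) by (simp add: fun_eq_iff wshift_def step_weight_def pseudo_shift_def)
  have N: "1 \<le> N" using assms(2) by simp
  note hyps = assms(1) N assms(3)[rule_format] assms(4)[rule_format]
    assms(5)[rule_format, THEN conjunct2] lam_gt_1
  have "\<forall>i\<in>{1..N}. invertible_lp p (wshift (d i) (l i) (lam i))"
    using invertible_wshift lam_gt_1 assms(1) by (simp add: less_imp_le)
  then show ?thesis
    unfolding T using disjoint_hypercyclic_wshift[where d=d and l=l and lam=lam, OF hyps]
      disjoint_hypercyclic_wshift_inverse[where d=d and l=l and lam=lam, OF hyps] by blast
qed

end
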